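(* Let $\overline{G}$ be the roommate diversity game with red agents $r_1,r_2,r_3$, blue agents $b_1,\dots,b_6$, room size $3$ and the trichotomous preferences described in the context. Then $\overline{G}$ has no popular outcome; in particular, a popular outcome is not guaranteed to exist in a roommate diversity game.
   Context: A roommate diversity game consists of disjoint finite sets $R$ (red agents) and $B$ (blue agents), a room size $s$ with $s$ dividing $|R\cup B|$, and for each agent a weak order over the fractions $\{j/s: 0\le j\le s\}$. An outcome is a partition of $R\cup B$ into rooms of size $s$; $\pi(a)$ is the room containing $a$ and $\theta(C)=|C\cap R|/|C|$. Agent $a$ prefers $\pi$ to $\pi'$ if it strictly prefers $\theta(\pi(a))$ to $\theta(\pi'(a))$; $N(\pi,\pi')$ is the set of agents preferring $\pi$ to $\pi'$, $\phi(\pi,\pi')=|N(\pi,\pi')|-|N(\pi',\pi)|$, and $\pi$ is popular if $\phi(\pi,\pi')\ge 0$ for every outcome $\pi'$. A trichotomous preference is given by a partition of the fractions into sets $D_a^+$ (approved), $D_a^n$ (neutral), $D_a^-$ (disapproved), possibly empty, with approved $\succ$ neutral $\succ$ disapproved and indifference within each set. In $\overline{G}$ ($s=3$): $r_1$: $D^+=\{1/3\}$, $D^-=\{2/3,1\}$; $r_2,r_3$: $D^+=\{2/3\}$, $D^-=\{1/3,1\}$; $b_1,\dots,b_4$: $D^+=\{1/3\}$, $D^n=\{2/3\}$, $D^-=\{0\}$; $b_5,b_6$: $D^+=\{0\}$, $D^-=\{1/3,2/3\}$ (a red agent is never in a room of fraction $0$, a blue agent never in one of fraction $1$). *)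

theory Defs
  imports Complex_Main "HOL-Library.Disjoint_Sets"
begin

(* General roommate diversity game. Agents of type 'a; R red, B blue.
   Preferences: pref a x y means agent a weakly prefers fraction x to fraction y. *)

definition theta :: "'a set \<Rightarrow> 'a set \<Rightarrow> rat" where
  "theta R C = of_nat (card (C \<inter> R)) / of_nat (card C)"

definition is_outcome :: "'a set \<Rightarrow> 'a set \<Rightarrow> nat \<Rightarrow> 'a set set \<Rightarrow> bool" where
  "is_outcome R B s P \<longleftrightarrow> partition_on (R \<union> B) P \<and> (\<forall>C\<in>P. card C = s)"

definition room :: "'a set set \<Rightarrow> 'a \<Rightarrow> 'a set" where
  "room P a = (THE C. C \<in> P \<and> a \<in> C)"

definition strict_pref :: "('a \<Rightarrow> rat \<Rightarrow> rat \<Rightarrow> bool) \<Rightarrow> 'a \<Rightarrow> rat \<Rightarrow> rat \<Rightarrow> bool" where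
  "strict_pref pref a x y \<longleftrightarrow> pref a x y \<and> \<not> pref a y x"

definition N_pref :: "'a set \<Rightarrow> 'a set \<Rightarrow> ('a \<Rightarrow> rat \<Rightarrow> rat \<Rightarrow> bool) \<Rightarrow> 'a set set \<Rightarrow> 'a set set \<Rightarrow> 'a set" where
  "N_pref R B pref P P' = {a \<in> R \<union> B. strict_pref pref a (theta R (room P a)) (theta R (room P' a))}"

definition phi :: "'a set \<Rightarrow> 'a set \<Rightarrow> ('a \<Rightarrow> rat \<Rightarrow> rat \<Rightarrow> bool) \<Rightarrow> 'a set set \<Rightarrow> 'a set set \<Rightarrow> int" where
  "phi R B pref P P' = int (card (N_pref R B pref P P')) - int (card (N_pref R B pref P' P))"

definition popular :: "'a set \<Rightarrow> 'a set \<Rightarrow> nat \<Rightarrow> ('a \<Rightarrow> rat \<Rightarrow> rat \<Rightarrow> bool) \<Rightarrow> 'a set set \<Rightarrow> bool" where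
  "popular R B s pref P \<longleftrightarrow> is_outcome R B s P \<and> (\<forall>P'. is_outcome R B s P' \<longrightarrow> phi R B pref P P' \<ge> 0)"

(* Trichotomous preference from approved / neutral / disapproved sets (a partition of the fractions):
   approved > neutral > disapproved, indifferent within each class. Encoded by a score. *)
definition tri_score :: "rat set \<Rightarrow> rat set \<Rightarrow> rat \<Rightarrow> nat" where
  "tri_score Dplus Dneutral x = (if x \<in> Dplus then 2 else if x \<in> Dneutral then 1 else 0)"

definition tri_pref :: "rat set \<Rightarrow> rat set \<Rightarrow> rat \<Rightarrow> rat \<Rightarrow> bool" where
  "tri_pref Dplus Dneutral x y \<longleftrightarrow> tri_score Dplus Dneutral x \<ge> tri_score Dplus Dneutral y"

datatype agent = r1 | r2 | r3 | b1 | b2 | b3 | b4 | b5 | b6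

definition Gbar_R :: "agent set" where "Gbar_R = {r1, r2, r3}"
definition Gbar_B :: "agent set" where "Gbar_B = {b1, b2, b3, b4, b5, b6}"

(* Disapproved sets are the complements of approved \<union> neutral within {0,1/3,2/3,1};
   fractions 0 for red and 1 for blue never occur, as stated in the paper. *)
fun Gbar_pref :: "agent \<Rightarrow> rat \<Rightarrow> rat \<Rightarrow> bool" where
  "Gbar_pref r1 = tri_pref {1/3} {}"
| "Gbar_pref r2 = tri_pref {2/3} {}"
| "Gbar_pref r3 = tri_pref {2/3} {}"
| "Gbar_pref b1 = tri_pref {1/3} {2/3}"
| "Gbar_pref b2 = tri_pref {1/3} {2/3}"
| "Gbar_pref b3 = tri_pref {1/3} {2/3}"
| "Gbar_pref b4 = tri_pref {1/3} {2/3}"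
| "Gbar_pref b5 = tri_pref {0} {}"
| "Gbar_pref b6 = tri_pref {0} {}"

end

theory Submission
  imports Defs
begin

(* Agents care only about the number of red agents in their room, so an outcome matters only
   through its profile, which records this number for every agent.  There are three kinds of
   profiles: all red agents in one room, the
   red agents in three different rooms, or two red agents with a blue agent and the third red
   agent with two blue agents.  In an outcome {{r2, r3, \<beta>}, {r1, x, y}, rest} with \<beta>, x, y
   among b1, ..., b4, all red agents, x, y, b5 and b6 are maximally satisfied, so at most two
   agents prefer any other outcome to it; for every profile some choice of \<beta>, x, y makes more
   agents prefer this outcome, which is a finite check. *)

lemma card3_obtain_others:
  assumes "card C = 3" "a \<in> C"
  obtains x y where "C = {a, x, y}" "distinct [a, x, y]"
proof -
  have "card (C - {a}) = 2"
    using assms by (simp add: card_gt_0_iff)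
  then obtain x y where xy: "C - {a} = {x, y}" "x \<noteq> y"
    by (meson card_2_iff)
  then have "C = {a, x, y}"
    using assms(2) by blast
  moreover have "x \<noteq> a" "y \<noteq> a"
    using xy(1) by blast+
  ultimately show ?thesis
    using xy(2) that by simp
qed

lemma card3_obtain_third:
  assumes "card C = 3" "a \<in> C" "b \<in> C" "a \<noteq> b"
  obtains c where "C = {a, b, c}" "distinct [a, b, c]"
proof -
  obtain x y where C: "C = {a, x, y}" "distinct [a, x, y]"
    using card3_obtain_others[OF assms(1,2)] .
  then have "b = x \<or> b = y"
    using assms(3,4) by blast
  then show ?thesis
    using C that by (auto simp: insert_commute)
qed

lemma room_eqI:
  assumes "partition_on A P" "C \<in> P" "a \<in> C"
  shows "room P a = C"
  unfolding room_def
proof (rule the_equality)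
  show "C \<in> P \<and> a \<in> C"
    using assms by blast
next
  fix C' assume "C' \<in> P \<and> a \<in> C'"
  then show "C' = C"
    using assms partition_onD2[OF assms(1)] unfolding disjoint_def by blast
qed

lemma
  assumes "partition_on A P" "a \<in> A"
  shows room_in_partition: "room P a \<in> P"
    and mem_room: "a \<in> room P a"
proof -
  obtain C where "C \<in> P" "a \<in> C"
    using partition_onD1[OF assms(1)] assms(2) by blast
  then show "room P a \<in> P" "a \<in> room P a"
    using room_eqI[OF assms(1)] by simp_all
qed

lemma room_eq_room:
  assumes "partition_on A P" "a \<in> A" "b \<in> room P a"
  shows "room P b = room P a"
  using room_eqI[OF assms(1) room_in_partition[OF assms(1,2)] assms(3)] .

lemma room_disjoint:
  assumes "partition_on A P" "a \<in> A" "b \<in> A" "b \<notin> room P a"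
  shows "room P a \<inter> room P b = {}"
  using room_eq_room[OF assms(1)] mem_room[OF assms(1)] assms(2-4) by blast

lemma theta_room:
  assumes "is_outcome R B s P" "a \<in> R \<union> B"
  shows "theta R (room P a) = of_nat (card (room P a \<inter> R)) / of_nat s"
  using assms room_in_partition[of "R \<union> B" P a]
  unfolding is_outcome_def theta_def by (simp add: Int_commute)

lemma strict_pref_tri_pref_iff:
  "strict_pref (\<lambda>a. tri_pref (D a) (E a)) a x y \<longleftrightarrow>
     tri_score (D a) (E a) y < tri_score (D a) (E a) x"
  by (auto simp: strict_pref_def tri_pref_def)

lemma tri_score_inj_image:
  assumes "inj f"
  shows "tri_score (f ` A) (f ` B) (f k) = (if k \<in> A then 2 else if k \<in> B then 1 else 0)"
  using assms by (simp add: tri_score_def inj_image_mem_iff)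

definition red_fraction :: "nat \<Rightarrow> rat" where
  "red_fraction j = of_nat j / 3"

fun approved_reds :: "agent \<Rightarrow> nat set" where
  "approved_reds r1 = {1}"
| "approved_reds r2 = {2}"
| "approved_reds r3 = {2}"
| "approved_reds b5 = {0}"
| "approved_reds b6 = {0}"
| "approved_reds _ = {1}"

definition neutral_reds :: "agent \<Rightarrow> nat set" where
  "neutral_reds a = (if a \<in> {b1, b2, b3, b4} then {2} else {})"

lemma Gbar_pref_eq:
  "Gbar_pref = (\<lambda>a. tri_pref (red_fraction ` approved_reds a) (red_fraction ` neutral_reds a))"
proof
  fix a
  show "Gbar_pref a = tri_pref (red_fraction ` approved_reds a) (red_fraction ` neutral_reds a)"
    by (cases a) (simp_all add: red_fraction_def neutral_reds_def)
qed

lemma inj_red_fraction: "inj red_fraction"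
  by (rule injI) (simp add: red_fraction_def)

definition satisfaction :: "agent \<Rightarrow> nat \<Rightarrow> nat" where
  "satisfaction a j = (if j \<in> approved_reds a then 2 else if j \<in> neutral_reds a then 1 else 0)"

lemma strict_pref_Gbar_iff:
  "strict_pref Gbar_pref a (red_fraction j) (red_fraction k) \<longleftrightarrow>
     satisfaction a k < satisfaction a j"
  unfolding Gbar_pref_eq strict_pref_tri_pref_iff tri_score_inj_image[OF inj_red_fraction]
  by (simp add: satisfaction_def)

definition agents :: "agent list" where
  "agents = [r1, r2, r3, b1, b2, b3, b4, b5, b6]"

lemma mem_agents: "a \<in> set agents"
  by (cases a) (simp_all add: agents_def)

lemma card_Collect_agent: "card {a. Q a} = length (filter Q agents)"
proof -
  have "{a. Q a} = set (filter Q agents)"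
    using mem_agents by auto
  then show ?thesis
    by (simp add: distinct_card agents_def)
qed

instance agent :: finite
proof
  have "UNIV = set agents"
    using mem_agents by blast
  then show "finite (UNIV :: agent set)"
    by (metis List.finite_set)
qed

lemma card_UNIV_agent: "card (UNIV :: agent set) = 9"
  using card_Collect_agent[of "\<lambda>_. True"] by (simp add: agents_def)

lemma card_Gbar_R: "card Gbar_R = 3"
  by (simp add: Gbar_R_def)

lemma Gbar_agents: "Gbar_R \<union> Gbar_B = UNIV"
  using mem_agents by (auto simp: Gbar_R_def Gbar_B_def agents_def)

definition red_count :: "agent set set \<Rightarrow> agent \<Rightarrow> nat" where
  "red_count P a = card (room P a \<inter> Gbar_R)"

definition profile_phi :: "(agent \<Rightarrow> nat) \<Rightarrow> (agent \<Rightarrow> nat) \<Rightarrow> int" where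
  "profile_phi v w = int (card {a. satisfaction a (w a) < satisfaction a (v a)})
                   - int (card {a. satisfaction a (v a) < satisfaction a (w a)})"

lemma phi_eq_profile_phi:
  assumes "is_outcome Gbar_R Gbar_B 3 P" "is_outcome Gbar_R Gbar_B 3 P'"
  shows "phi Gbar_R Gbar_B Gbar_pref P P' = profile_phi (red_count P) (red_count P')"
proof -
  have "N_pref Gbar_R Gbar_B Gbar_pref Q Q' =
          {a. satisfaction a (red_count Q' a) < satisfaction a (red_count Q a)}"
    if "is_outcome Gbar_R Gbar_B 3 Q" "is_outcome Gbar_R Gbar_B 3 Q'" for Q Q'
    using theta_room[OF that(1)] theta_room[OF that(2)]
    unfolding N_pref_def Gbar_agents
    by (simp add: red_count_def strict_pref_Gbar_iff flip: red_fraction_def)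
  then show ?thesis
    using assms unfolding phi_def profile_phi_def by simp
qed

definition reds_together :: "agent \<Rightarrow> nat" where
  "reds_together a = (if a \<in> Gbar_R then 3 else 0)"

definition reds_apart :: "agent \<Rightarrow> nat" where
  "reds_apart a = 1"

(* \<rho> shares a room with the blue agents x and y, the other two red agents share one with \<beta>. *)
definition split_profile :: "agent \<Rightarrow> agent \<Rightarrow> agent \<Rightarrow> agent \<Rightarrow> agent \<Rightarrow> nat" where
  "split_profile \<rho> \<beta> x y a =
     (if a \<in> Gbar_R then if a = \<rho> then 1 else 2
      else if a = \<beta> then 2 else if a = x \<or> a = y then 1 else 0)"

locale Gbar_outcome =
  fixes P :: "agent set set"
  assumes outcome: "is_outcome Gbar_R Gbar_B 3 P"
begin

lemma partition: "partition_on UNIV P"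
  using outcome Gbar_agents unfolding is_outcome_def by simp

lemmas room_in_P = room_in_partition[OF partition UNIV_I]
   and mem_room = mem_room[OF partition UNIV_I]
   and room_eq_room = room_eq_room[OF partition UNIV_I]
   and room_disjoint = room_disjoint[OF partition UNIV_I UNIV_I]

lemma card_room: "card (room P a) = 3"
  using outcome room_in_P unfolding is_outcome_def by blast

lemma finite_room: "finite (room P a)"
  using card_room by (metis card.infinite zero_neq_numeral)

lemma room_sym: "b \<in> room P a \<Longrightarrow> a \<in> room P b"
  using room_eq_room mem_room by metis

lemma red_count_eq: "b \<in> room P a \<Longrightarrow> red_count P b = red_count P a"
  unfolding red_count_def using room_eq_room by simp

lemma red_count_reds_together:
  assumes "r2 \<in> room P r1" "r3 \<in> room P r1"
  shows "red_count P = reds_together"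
proof
  have "Gbar_R \<subseteq> room P r1"
    using assms mem_room by (auto simp: Gbar_R_def)
  then have "room P r1 = Gbar_R"
    using card_subset_eq[OF finite_room] card_room card_Gbar_R by metis
  then have room_red: "room P r = Gbar_R" if "r \<in> Gbar_R" for r
    using that room_eq_room by metis
  fix a
  show "red_count P a = reds_together a"
  proof (cases "a \<in> Gbar_R")
    case True
    then show ?thesis
      using room_red card_Gbar_R by (simp add: red_count_def reds_together_def)
  next
    case False
    have "r \<notin> room P a" if "r \<in> Gbar_R" for r
      using False room_sym room_red that by blast
    then have "room P a \<inter> Gbar_R = {}"
      by blast
    then show ?thesis
      using False by (simp add: red_count_def reds_together_def)
  qed
qed

lemma red_count_reds_apart:
  assumes "r2 \<notin> room P r1" "r3 \<notin> room P r1" "r3 \<notin> room P r2"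
  shows "red_count P = reds_apart"
proof
  have disjoint: "room P r1 \<inter> room P r2 = {}" "room P r1 \<inter> room P r3 = {}"
    "room P r2 \<inter> room P r3 = {}"
    using assms room_disjoint by blast+
  have "card (room P r1 \<union> room P r2 \<union> room P r3) = 9"
    using disjoint card_room finite_room by (simp add: card_Un_disjoint Int_Un_distrib2)
  then have cover: "room P r1 \<union> room P r2 \<union> room P r3 = UNIV"
    using card_UNIV_agent by (intro card_subset_eq[OF finite subset_UNIV]) simp
  have one_red: "room P r \<inter> Gbar_R = {r}" if "r \<in> Gbar_R" for r
    using that assms room_sym mem_room by (auto simp: Gbar_R_def)
  fix a
  obtain r where "r \<in> Gbar_R" "a \<in> room P r"
    using cover by (auto simp: Gbar_R_def)
  then have "room P a \<inter> Gbar_R = {r}"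
    using room_eq_room one_red by metis
  then show "red_count P a = reds_apart a"
    by (simp add: red_count_def reds_apart_def)
qed

lemma red_count_eq_split_profile:
  assumes reds: "Gbar_R = {\<rho>, p, q}" "distinct [\<rho>, p, q]"
    and room_p: "room P p = {p, q, \<beta>}" and room_\<rho>: "room P \<rho> = {\<rho>, x, y}"
    and disjoint: "room P p \<inter> room P \<rho> = {}"
    and blue: "\<beta> \<notin> Gbar_R" "x \<notin> Gbar_R" "y \<notin> Gbar_R"
  shows "red_count P = split_profile \<rho> \<beta> x y"
proof
  fix a
  consider "a \<in> room P p" | "a \<in> room P \<rho>" | "a \<notin> room P p" "a \<notin> room P \<rho>"
    by blast
  then show "red_count P a = split_profile \<rho> \<beta> x y a"
  proof cases
    case 1
    have "room P p \<inter> Gbar_R = {p, q}"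
      using room_p reds blue by auto
    then have "red_count P a = 2"
      using 1 red_count_eq reds(2) by (simp add: red_count_def)
    moreover have "a \<in> {p, q, \<beta>}" "a \<noteq> \<rho>"
      using 1 room_p disjoint mem_room[of \<rho>] by auto
    ultimately show ?thesis
      using reds blue by (auto simp: split_profile_def)
  next
    case 2
    have "room P \<rho> \<inter> Gbar_R = {\<rho>}"
      using room_\<rho> reds blue by auto
    then have "red_count P a = 1"
      using 2 red_count_eq by (simp add: red_count_def)
    moreover have "a \<in> {\<rho>, x, y}" "a \<noteq> \<beta>"
      using 2 room_\<rho> room_p disjoint by auto
    ultimately show ?thesis
      using reds blue by (auto simp: split_profile_def)
  next
    case 3
    have "r \<notin> room P a" if "r \<in> Gbar_R" for r
    proof
      assume "r \<in> room P a"
      then have "a \<in> room P r"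
        by (rule room_sym)
      moreover have "r \<in> room P p \<or> r \<in> room P \<rho>"
        using that reds room_p mem_room[of \<rho>] by auto
      ultimately show False
        using 3 room_eq_room by blast
    qed
    then have "red_count P a = 0"
      by (auto simp: red_count_def)
    moreover have "a \<notin> Gbar_R" "a \<notin> {\<beta>, x, y}"
      using 3 reds room_p room_\<rho> mem_room by auto
    ultimately show ?thesis
      by (simp add: split_profile_def)
  qed
qed

lemma red_count_split:
  assumes reds: "Gbar_R = {\<rho>, p, q}" "distinct [\<rho>, p, q]"
    and "q \<in> room P p" "\<rho> \<notin> room P p"
  obtains \<beta> x y where "\<beta> \<in> Gbar_B" "x \<in> Gbar_B" "y \<in> Gbar_B" "distinct [\<beta>, x, y]"
    "red_count P = split_profile \<rho> \<beta> x y"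
proof -
  obtain \<beta> where room_p: "room P p = {p, q, \<beta>}" "distinct [p, q, \<beta>]"
    using card3_obtain_third[OF card_room mem_room] assms(3) reds(2) by auto
  obtain x y where room_\<rho>: "room P \<rho> = {\<rho>, x, y}" "distinct [\<rho>, x, y]"
    using card3_obtain_others[OF card_room mem_room] .
  have disjoint: "room P p \<inter> room P \<rho> = {}"
    using room_disjoint assms(4) by blast
  have blue: "\<beta> \<notin> Gbar_R" "x \<notin> Gbar_R" "y \<notin> Gbar_R"
    using room_p room_\<rho> disjoint reds by auto
  moreover have "distinct [\<beta>, x, y]"
    using room_p room_\<rho> disjoint by auto
  ultimately show ?thesis
    using that Gbar_agents red_count_eq_split_profile[OF reds room_p(1) room_\<rho>(1) disjoint blue]
    by blast
qed

lemma red_count_cases: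
  "red_count P = reds_together \<or> red_count P = reds_apart \<or>
   (\<exists>\<rho> \<beta> x y. \<rho> \<in> Gbar_R \<and> \<beta> \<in> Gbar_B \<and> x \<in> Gbar_B \<and> y \<in> Gbar_B \<and> distinct [\<beta>, x, y] \<and>
      red_count P = split_profile \<rho> \<beta> x y)"
proof -
  have split: "\<exists>\<beta> x y. \<beta> \<in> Gbar_B \<and> x \<in> Gbar_B \<and> y \<in> Gbar_B \<and> distinct [\<beta>, x, y] \<and>
      red_count P = split_profile \<rho> \<beta> x y"
    if "Gbar_R = {\<rho>, p, q}" "distinct [\<rho>, p, q]" "q \<in> room P p" "\<rho> \<notin> room P p" for \<rho> p q
    using red_count_split[OF that] by metis
  have reds: "Gbar_R = {r3, r1, r2}" "Gbar_R = {r2, r1, r3}" "Gbar_R = {r1, r2, r3}"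
    by (auto simp: Gbar_R_def)
  have reds_mem: "r1 \<in> Gbar_R" "r2 \<in> Gbar_R" "r3 \<in> Gbar_R"
    by (simp_all add: Gbar_R_def)
  have distinct: "distinct [r3, r1, r2]" "distinct [r2, r1, r3]" "distinct [r1, r2, r3]"
    by simp_all
  consider "r2 \<in> room P r1" "r3 \<in> room P r1"
    | "r2 \<in> room P r1" "r3 \<notin> room P r1"
    | "r2 \<notin> room P r1" "r3 \<in> room P r1"
    | "r2 \<notin> room P r1" "r3 \<notin> room P r1" "r3 \<in> room P r2"
    | "r2 \<notin> room P r1" "r3 \<notin> room P r1" "r3 \<notin> room P r2"
    by blast
  then show ?thesis
  proof cases
    case 1
    then show ?thesis using red_count_reds_together by blast
  next
    case 2
    then show ?thesis using split[OF reds(1) distinct(1)] reds_mem by blast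
  next
    case 3
    then show ?thesis using split[OF reds(2) distinct(2)] reds_mem by blast
  next
    case 4
    then have "r1 \<notin> room P r2"
      using room_sym by blast
    then show ?thesis using 4 split[OF reds(3) distinct(3)] reds_mem by blast
  next
    case 5
    then show ?thesis using red_count_reds_apart by blast
  qed
qed

end

definition split_outcome :: "agent \<Rightarrow> agent \<Rightarrow> agent \<Rightarrow> agent set set" where
  "split_outcome \<beta> x y = {{r2, r3, \<beta>}, {r1, x, y}, - {r1, r2, r3, \<beta>, x, y}}"

lemma split_outcome:
  assumes "\<beta> \<in> Gbar_B" "x \<in> Gbar_B" "y \<in> Gbar_B" "distinct [\<beta>, x, y]"
  shows "is_outcome Gbar_R Gbar_B 3 (split_outcome \<beta> x y)"
    and "red_count (split_outcome \<beta> x y) = split_profile r1 \<beta> x y"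
proof -
  have blue: "\<beta> \<notin> Gbar_R" "x \<notin> Gbar_R" "y \<notin> Gbar_R"
    using assms(1-3) by (auto simp: Gbar_R_def Gbar_B_def)
  then have "card {r1, r2, r3, \<beta>, x, y} = 6"
    using assms(4) by (auto simp: Gbar_R_def)
  then have card_rest: "card (- {r1, r2, r3, \<beta>, x, y}) = 3"
    using card_UNIV_agent by (simp add: Compl_eq_Diff_UNIV card_Diff_subset)
  have partition: "partition_on UNIV (split_outcome \<beta> x y)"
    unfolding split_outcome_def using blue assms(4) card_rest
    by (intro partition_onI) (auto simp: Gbar_R_def disjnt_def)
  then show "is_outcome Gbar_R Gbar_B 3 (split_outcome \<beta> x y)"
    unfolding is_outcome_def Gbar_agents split_outcome_def
    using blue assms(4) card_rest by (auto simp: Gbar_R_def)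
  show "red_count (split_outcome \<beta> x y) = split_profile r1 \<beta> x y"
  proof
    fix a
    consider "a \<in> {r2, r3, \<beta>}" | "a \<in> {r1, x, y}" | "a \<in> - {r1, r2, r3, \<beta>, x, y}"
      by blast
    then show "red_count (split_outcome \<beta> x y) a = split_profile r1 \<beta> x y a"
    proof cases
      case 1
      then have "room (split_outcome \<beta> x y) a = {r2, r3, \<beta>}"
        by (intro room_eqI[OF partition]) (auto simp: split_outcome_def)
      then show ?thesis
        using 1 blue assms(4) by (auto simp: red_count_def split_profile_def Gbar_R_def)
    next
      case 2
      then have "room (split_outcome \<beta> x y) a = {r1, x, y}"
        by (intro room_eqI[OF partition]) (auto simp: split_outcome_def)
      then show ?thesis
        using 2 blue assms(4) by (auto simp: red_count_def split_profile_def Gbar_R_def)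
    next
      case 3
      then have "room (split_outcome \<beta> x y) a = - {r1, r2, r3, \<beta>, x, y}"
        by (intro room_eqI[OF partition]) (auto simp: split_outcome_def)
      then show ?thesis
        using 3 by (auto simp: red_count_def split_profile_def Gbar_R_def)
    qed
  qed
qed

definition witnesses :: "(agent \<times> agent \<times> agent) list" where
  "witnesses = [(b4, b2, b3), (b3, b2, b4), (b2, b3, b4), (b1, b3, b4),
                (b4, b1, b3), (b3, b1, b4), (b2, b1, b4), (b1, b2, b4)]"

lemma witnesses_valid:
  "(\<beta>, x, y) \<in> set witnesses \<Longrightarrow> \<beta> \<in> Gbar_B \<and> x \<in> Gbar_B \<and> y \<in> Gbar_B \<and> distinct [\<beta>, x, y]"
  by (auto simp: witnesses_def Gbar_B_def)

definition beaten :: "(agent \<Rightarrow> nat) \<Rightarrow> bool" where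
  "beaten v \<longleftrightarrow> (\<exists>(\<beta>, x, y) \<in> set witnesses. profile_phi v (split_profile r1 \<beta> x y) < 0)"

lemma beaten_code [code]:
  "beaten v \<longleftrightarrow> list_ex (\<lambda>(\<beta>, x, y).
     length (filter (\<lambda>a. satisfaction a (split_profile r1 \<beta> x y a) < satisfaction a (v a)) agents)
   < length (filter (\<lambda>a. satisfaction a (v a) < satisfaction a (split_profile r1 \<beta> x y a)) agents))
   witnesses"
  by (auto simp: beaten_def profile_phi_def card_Collect_agent list_ex_iff)

lemma beaten_reds_together: "beaten reds_together"
  by code_simp

lemma beaten_reds_apart: "beaten reds_apart"
  by code_simp

lemma beaten_split_profile:
  assumes "\<rho> \<in> Gbar_R" "\<beta> \<in> Gbar_B" "x \<in> Gbar_B" "y \<in> Gbar_B" "distinct [\<beta>, x, y]"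
  shows "beaten (split_profile \<rho> \<beta> x y)"
proof -
  have "\<forall>\<rho>\<in>Gbar_R. \<forall>\<beta>\<in>Gbar_B. \<forall>x\<in>Gbar_B. \<forall>y\<in>Gbar_B.
          distinct [\<beta>, x, y] \<longrightarrow> beaten (split_profile \<rho> \<beta> x y)"
    unfolding Gbar_R_def Gbar_B_def by code_simp
  then show ?thesis
    using assms by blast
qed

theorem mainTheorem10:
  shows "\<not> (\<exists>P. popular Gbar_R Gbar_B 3 Gbar_pref P)"
proof
  assume "\<exists>P. popular Gbar_R Gbar_B 3 Gbar_pref P"
  then obtain P where popular: "popular Gbar_R Gbar_B 3 Gbar_pref P" ..
  then interpret Gbar_outcome P
    by unfold_locales (simp add: popular_def)
  have "beaten (red_count P)"
    using red_count_cases beaten_reds_together beaten_reds_apart beaten_split_profile by metis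
  then obtain \<beta> x y where witness: "(\<beta>, x, y) \<in> set witnesses"
    and loses: "profile_phi (red_count P) (split_profile r1 \<beta> x y) < 0"
    unfolding beaten_def by blast
  from witnesses_valid[OF witness]
  have "\<beta> \<in> Gbar_B" "x \<in> Gbar_B" "y \<in> Gbar_B" "distinct [\<beta>, x, y]"
    by simp_all
  note split = split_outcome[OF this]
  have "phi Gbar_R Gbar_B Gbar_pref P (split_outcome \<beta> x y) < 0"
    using phi_eq_profile_phi[OF outcome split(1)] split(2) loses by simp
  moreover have "phi Gbar_R Gbar_B Gbar_pref P (split_outcome \<beta> x y) \<ge> 0"
    using popular split(1) unfolding popular_def by blast
  ultimately show False
    by simp
qed

end
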